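(* Let $k\ge 2$ and let $P,Q$ be distributions over $x=(x_1,\dots,x_k)$ with $x_i\in\{1,\dots,r_i\}$, and assume $P(x_i=t)>0$ for all $i\in[k]$, $t\in[r_i]$. Let $\mathcal{F}=\{\sum_{i=1}^k f_i(x_i)\}$ with $f_i:\{1,\dots,r_i\}\to\mathbb{R}$ arbitrary, and $r=\sum_{i=1}^k r_i$. Then $$\tau(P,Q,\mathcal{F})=\sup_{v\in\mathbb{R}^{r}}\frac{v^\top K_Q v}{v^\top K_P v}\le \frac{k}{\lambda_k(\bar K_P)}\max_{i\in[k],\,t\in[r_i]}\frac{Q(x_i=t)}{P(x_i=t)}$$ (the supremum using the convention $0/0=0$, and the bound interpreted as $+\infty$ if $\lambda_k(\bar K_P)=0$).
   Context: $\tau(P,Q,\mathcal{F})=\sup_{f,g\in\mathcal{F}}\mathbb{E}_Q[(f(x)-g(x))^2]/\mathbb{E}_P[(f(x)-g(x))^2]$ with the convention $0/0=0$. For a distribution $P$, define blocks $P_{ij}\in\mathbb{R}^{r_i\times r_j}$ by $[P_{ij}]_{a,b}=P(x_i=a,x_j=b)$ for $i\ne j$, and $P_{ii}\in\mathbb{R}^{r_i\times r_i}$ diagonal with $[P_{ii}]_{a,a}=P(x_i=a)$. Let $K_P\in\mathbb{R}^{r\times r}$ be the block matrix with $(i,j)$ block $P_{ij}$, and $\bar K_P=\mathrm{diag}(K_P)^{-1/2}K_P\,\mathrm{diag}(K_P)^{-1/2}$, where $\mathrm{diag}(K_P)$ keeps only the diagonal entries of $K_P$; $K_Q$ is defined analogously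 from $Q$. $\lambda_k(M)$ denotes the $k$-th smallest eigenvalue of a symmetric matrix $M$. *)

theory Defs
  imports "Jordan_Normal_Form.Char_Poly" "HOL-Probability.Probability_Mass_Function"
begin

text \<open>Variables are indexed 0-based: coordinates i < k, and x_i ranges over {0..<r i}
  (the paper's {1..r_i} shifted by one).\<close>

definition sample_space :: "nat \<Rightarrow> (nat \<Rightarrow> nat) \<Rightarrow> (nat \<Rightarrow> nat) set" where
  "sample_space k r = PiE {..<k} (\<lambda>i. {..<r i})"

definition marg :: "(nat \<Rightarrow> nat) pmf \<Rightarrow> nat \<Rightarrow> nat \<Rightarrow> real" where
  "marg P i a = measure_pmf.prob P {x. x i = a}"

definition marg2 :: "(nat \<Rightarrow> nat) pmf \<Rightarrow> nat \<Rightarrow> nat \<Rightarrow> nat \<Rightarrow> nat \<Rightarrow> real" where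
  "marg2 P i a j b = measure_pmf.prob P {x. x i = a \<and> x j = b}"

definition additive_class :: "nat \<Rightarrow> ((nat \<Rightarrow> nat) \<Rightarrow> real) set" where
  "additive_class k = {(\<lambda>x. \<Sum>i<k. fs i (x i)) | fs :: nat \<Rightarrow> nat \<Rightarrow> real. True}"

definition eratio :: "real \<Rightarrow> real \<Rightarrow> ereal" where
  "eratio a b = (if b = 0 then (if a = 0 then 0 else \<infinity>) else ereal (a / b))"

definition transfer_coeff ::
  "(nat \<Rightarrow> nat) pmf \<Rightarrow> (nat \<Rightarrow> nat) pmf \<Rightarrow> ((nat \<Rightarrow> nat) \<Rightarrow> real) set \<Rightarrow> ereal" where
  "transfer_coeff P Q F =
     (SUP fg \<in> F \<times> F. eratio
        (measure_pmf.expectation Q (\<lambda>x. (fst fg x - snd fg x)\<^sup>2))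
        (measure_pmf.expectation P (\<lambda>x. (fst fg x - snd fg x)\<^sup>2)))"

text \<open>Block layout of indices 0..<r (r = \<Sum>_{i<k} r_i): global index p belongs to block
  blk r p and has position pos r p inside it; block i occupies
  [\<Sum>_{j<i} r_j, \<Sum>_{j\<le>i} r_j).\<close>
definition blk :: "(nat \<Rightarrow> nat) \<Rightarrow> nat \<Rightarrow> nat" where
  "blk r p = (LEAST i. p < (\<Sum>j<Suc i. r j))"

definition pos :: "(nat \<Rightarrow> nat) \<Rightarrow> nat \<Rightarrow> nat" where
  "pos r p = p - (\<Sum>j<blk r p. r j)"

definition Kmat :: "nat \<Rightarrow> (nat \<Rightarrow> nat) \<Rightarrow> (nat \<Rightarrow> nat) pmf \<Rightarrow> real mat" where
  "Kmat k r P = Matrix.mat (\<Sum>i<k. r i) (\<Sum>i<k. r i) (\<lambda>(p, q).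
     (let i = blk r p; a = pos r p; j = blk r q; b = pos r q in
      if i = j then (if a = b then marg P i a else 0) else marg2 P i a j b))"

definition normalize_mat :: "real mat \<Rightarrow> real mat" where
  "normalize_mat K = (let D = Matrix.mat (dim_row K) (dim_row K)
       (\<lambda>(p, q). if p = q then 1 / sqrt (K $$ (p, p)) else 0) in D * K * D)"

text \<open>k-th smallest eigenvalue (1-based k, counted with multiplicity) of a real matrix
  whose characteristic polynomial splits over the reals (e.g. a symmetric one).\<close>
definition kth_smallest_eig :: "nat \<Rightarrow> real mat \<Rightarrow> real" where
  "kth_smallest_eig k M = sorted_list_of_multiset (proots (char_poly M)) ! (k - 1)"

end

(*
  Writing v blockwise as functions v_i on the values of x_i, the quadratic form of K_R is
  v^T K_R v = E_R[(\<Sum>_i v_i(x_i))^2], and differences of additive functions are exactly the functions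
  \<Sum>_i v_i(x_i); this is the variational formula for \<tau>.

  For the bound, K_P z = 0 whenever z is constant on each block with block values summing to zero,
  since every row of P_ij sums to a marginal of x_i. This gives a (k - 1)-dimensional subspace of the
  kernel, hence all of it when \<lambda>_k > 0, and in an eigenbasis of the normalised matrix one finds such a
  z with \<lambda>_k \<Sum>_i E_P[u_i(x_i)^2] \<le> v^T K_P v for u = v - z. Shifting by z does not change
  \<Sum>_i v_i(x_i), so by Cauchy-Schwarz
  v^T K_Q v = E_Q[(\<Sum>_i u_i)^2] \<le> k \<Sum>_i E_Q[u_i^2] \<le> k max_{i,t} Q(x_i = t)/P(x_i = t) \<Sum>_i E_P[u_i^2].
*)
theory Submission
  imports Defs "Jordan_Normal_Form.Schur_Decomposition"
begin

no_notation vec_nth (infixl "$" 90)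

section \<open>Spectral theorem for real symmetric matrices\<close>

lemma sym_mat_entry:
  "A\<^sup>T = A \<Longrightarrow> A \<in> carrier_mat n n \<Longrightarrow> i < n \<Longrightarrow> j < n \<Longrightarrow> A $$ (i, j) = A $$ (j, i)"
  by (metis index_transpose_mat(1) carrier_matD)

text \<open>The Rayleigh quotient \<open>u\<^sup>* A u / u\<^sup>* u\<close> of a real symmetric matrix is real.\<close>
lemma real_sym_complex_eigenvalue_real:
  fixes A :: "real mat"
  assumes A: "A \<in> carrier_mat n n" and sym: "A\<^sup>T = A"
    and u: "u \<in> carrier_vec n" and u0: "u \<noteq> 0\<^sub>v n"
    and Au: "map_mat complex_of_real A *\<^sub>v u = z \<cdot>\<^sub>v u"
  shows "Im z = 0"
proof -
  define L where "L = (\<Sum>i<n. cnj (u $ i) * (map_mat complex_of_real A *\<^sub>v u) $ i)"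
  define S where "S = (\<Sum>i<n. cnj (u $ i) * u $ i)"
  have LS: "L = z * S" unfolding L_def S_def Au using u
    by (auto simp: sum_distrib_left intro!: sum.cong)
  have L: "L = (\<Sum>i<n. \<Sum>j<n. cnj (u $ i) * complex_of_real (A $$ (i, j)) * u $ j)"
    using A u by (auto simp: L_def scalar_prod_def atLeast0LessThan sum_distrib_left
        mult.assoc intro!: sum.cong)
  have "cnj L = (\<Sum>i<n. \<Sum>j<n. u $ i * complex_of_real (A $$ (i, j)) * cnj (u $ j))"
    unfolding L by (simp add: cnj_sum)
  also have "\<dots> = (\<Sum>j<n. \<Sum>i<n. u $ i * complex_of_real (A $$ (i, j)) * cnj (u $ j))"
    by (rule sum.swap)
  also have "\<dots> = L" unfolding L
    by (auto intro!: sum.cong simp: sym_mat_entry[OF sym A] mult.commute mult.left_commute)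
  finally have L_real: "cnj L = L" .
  have S: "S = complex_of_real (\<Sum>i<n. (cmod (u $ i))\<^sup>2)"
    unfolding S_def of_real_sum by (intro sum.cong refl) (metis complex_norm_square mult.commute)
  obtain i where i: "i < n" "u $ i \<noteq> 0"
    using u u0 by (metis carrier_vecD eq_vecI index_zero_vec)
  have "(cmod (u $ i))\<^sup>2 \<le> (\<Sum>i<n. (cmod (u $ i))\<^sup>2)"
    by (rule member_le_sum) (use i in auto)
  moreover have "(cmod (u $ i))\<^sup>2 > 0" using i by auto
  ultimately have S0: "S \<noteq> 0" and S_real: "cnj S = S"
    unfolding S by (auto simp del: of_real_sum of_real_power)
  have "z = L / S" using LS S0 by auto
  hence "cnj z = z" using L_real S_real by simp
  thus ?thesis by (metis cnj.simps(2) neg_equal_zero)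
qed

lemma real_sym_char_poly_has_root:
  fixes A :: "real mat"
  assumes A: "A \<in> carrier_mat n n" and sym: "A\<^sup>T = A" and n: "n > 0"
  shows "\<exists>e. poly (char_poly A) e = 0"
proof -
  define C where "C = map_mat complex_of_real A"
  have C: "C \<in> carrier_mat n n" using A by (simp add: C_def)
  obtain as where cp: "char_poly C = (\<Prod>a\<leftarrow>as. [:- a, 1:])" and "length as = n"
    using char_poly_factorized[OF C] by blast
  then obtain z rest where as: "as = z # rest" using n by (cases as) auto
  have "poly (char_poly C) z = 0" unfolding cp as by simp
  hence "eigenvalue C z" using eigenvalue_root_char_poly[OF C] by simp
  hence "eigenvector C (find_eigenvector C z) z" using find_eigenvector[OF C] by blast
  then obtain u where "u \<in> carrier_vec n" "u \<noteq> 0\<^sub>v n" "C *\<^sub>v u = z \<cdot>\<^sub>v u"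
    using C unfolding eigenvector_def by auto
  hence "Im z = 0" using real_sym_complex_eigenvalue_real[OF A sym] unfolding C_def by blast
  hence z: "z = complex_of_real (Re z)" by (simp add: complex_eq_iff)
  have "complex_of_real (poly (char_poly A) (Re z)) = poly (char_poly C) z"
    unfolding C_def of_real_hom.char_poly_hom[OF A]
    by (subst z, induct "char_poly A") (auto simp: map_poly_pCons)
  also have "\<dots> = 0" by fact
  finally show ?thesis by auto
qed

definition diag_of_list :: "real list \<Rightarrow> real mat" where
  "diag_of_list es = Matrix.mat (length es) (length es) (\<lambda>(i, j). if i = j then es ! i else 0)"

lemma diag_of_list_carrier [simp]: "diag_of_list es \<in> carrier_mat (length es) (length es)"
  unfolding diag_of_list_def by simp

lemma diag_of_list_Cons:
  "diag_of_list (e # es) =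
     four_block_mat (Matrix.mat 1 1 (\<lambda>_. e)) (0\<^sub>m 1 (length es)) (0\<^sub>m (length es) 1) (diag_of_list es)"
  by (rule eq_matI) (auto simp: diag_of_list_def nth_Cons')

lemma mult_vec_diag_of_list:
  assumes "x \<in> carrier_vec (length es)" "l < length es"
  shows "(diag_of_list es *\<^sub>v x) $ l = es ! l * x $ l"
proof -
  have "(diag_of_list es *\<^sub>v x) $ l = (\<Sum>t\<in>{0..<length es}. (if l = t then es ! l else 0) * x $ t)"
    using assms by (auto simp: diag_of_list_def scalar_prod_def intro!: sum.cong)
  also have "\<dots> = es ! l * x $ l"
    using assms by (simp add: if_distrib[of "\<lambda>x. x * _"] sum.delta cong: if_cong)
  finally show ?thesis .
qed

lemma proots_prod_linear_factors: "proots (\<Prod>a\<leftarrow>es. [:- a, 1:]) = mset (es :: real list)"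
proof (induct es)
  case (Cons a es)
  have "(\<Prod>a\<leftarrow>es. [:- a, 1:]) \<noteq> (0 :: real poly)"
    using prod_list_zero_iff[of "map (\<lambda>a. [:-a, 1::real:]) es"] by auto
  hence "proots ([:- a, 1:] * (\<Prod>a\<leftarrow>es. [:- a, 1:])) =
      proots [:- a, 1:] + proots (\<Prod>a\<leftarrow>es. [:- a, 1:])"
    by (intro proots_mult) auto
  thus ?case using Cons by (simp add: proots_linear_factor)
qed simp

lemma orthogonal_mat_right_inverse:
  fixes W :: "real mat"
  assumes "W \<in> carrier_mat n n" "W\<^sup>T * W = 1\<^sub>m n"
  shows "W * W\<^sup>T = 1\<^sub>m n"
  using mat_mult_left_right_inverse[of "W\<^sup>T" n W] assms by auto

lemma char_poly_orthogonal_diag: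
  fixes W :: "real mat"
  assumes W: "W \<in> carrier_mat n n" and WW: "W\<^sup>T * W = 1\<^sub>m n" and es: "length es = n"
  shows "char_poly (W * diag_of_list es * W\<^sup>T) = (\<Prod>a\<leftarrow>es. [:- a, 1:])"
proof -
  have "similar_mat_wit (W * diag_of_list es * W\<^sup>T) (diag_of_list es) W (W\<^sup>T)"
    unfolding similar_mat_wit_def Let_def using W WW es orthogonal_mat_right_inverse[OF W WW] by auto
  hence "char_poly (W * diag_of_list es * W\<^sup>T) = char_poly (diag_of_list es)"
    by (intro char_poly_similar) (auto simp: similar_mat_def)
  also have "\<dots> = (\<Prod>a\<leftarrow>diag_mat (diag_of_list es). [:- a, 1:])"
    by (rule char_poly_upper_triangular[of _ "length es"])
      (auto simp: upper_triangular_def diag_of_list_def)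
  also have "diag_mat (diag_of_list es) = es"
    unfolding diag_mat_def by (rule nth_equalityI) (auto simp: diag_of_list_def)
  finally show ?thesis .
qed

lemma orthogonal_mat_of_corthogonal:
  fixes ws :: "real Matrix.vec list"
  assumes ws: "set ws \<subseteq> carrier_vec n" "corthogonal ws" "length ws = n"
  defines "c \<equiv> \<lambda>i. 1 / sqrt (ws ! i \<bullet> ws ! i)"
  defines "U \<equiv> mat_of_cols n (map (\<lambda>i. c i \<cdot>\<^sub>v ws ! i) [0..<n])"
  shows "U \<in> carrier_mat n n" "U\<^sup>T * U = 1\<^sub>m n" "\<And>i. i < n \<Longrightarrow> col U i = c i \<cdot>\<^sub>v ws ! i"
proof -
  have wsi: "ws ! i \<in> carrier_vec n" if "i < n" for i using ws that by auto
  have wo: "ws ! i \<bullet> ws ! j = 0 \<longleftrightarrow> i \<noteq> j" if "i < n" "j < n" for i j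
    using corthogonalD[OF ws(2), of i j] that ws by simp
  have wpos: "ws ! i \<bullet> ws ! i > 0" if "i < n" for i
  proof -
    have "ws ! i \<bullet> ws ! i \<ge> 0" using wsi[OF that]
      by (auto simp: scalar_prod_def intro!: sum_nonneg)
    with wo[OF that that] show ?thesis by auto
  qed
  show U: "U \<in> carrier_mat n n"
    unfolding U_def using mat_of_cols_carrier(1)[of n "map (\<lambda>i. c i \<cdot>\<^sub>v ws ! i) [0..<n]"] by simp
  show colU: "col U i = c i \<cdot>\<^sub>v ws ! i" if "i < n" for i
    unfolding U_def using that wsi[OF that] by simp
  have "col U i \<bullet> col U j = (if i = j then 1 else 0)" if "i < n" "j < n" for i j
  proof -
    have "col U i \<bullet> col U j = c i * c j * (ws ! i \<bullet> ws ! j)"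
      unfolding colU[OF that(1)] colU[OF that(2)] using wsi[OF that(1)] wsi[OF that(2)] by simp
    also have "\<dots> = (if i = j then 1 else 0)"
      using wo[OF that] wpos[OF that(1)] unfolding c_def by (auto simp: field_simps)
    finally show ?thesis .
  qed
  thus "U\<^sup>T * U = 1\<^sub>m n" by (intro eq_matI) (use U in auto)
qed

lemma orthogonal_mat_with_first_col:
  fixes v :: "real Matrix.vec"
  assumes v: "v \<in> carrier_vec n" and v0: "v \<noteq> 0\<^sub>v n"
  obtains U c where "U \<in> carrier_mat n n" "U\<^sup>T * U = 1\<^sub>m n" "col U 0 = c \<cdot>\<^sub>v v"
proof -
  interpret cof_vec_space n "TYPE(real)" .
  have n: "n > 0" using v v0 by (cases n) auto
  define b where "b = basis_completion v"
  from basis_completion[OF v v0, folded b_def]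
  have "distinct b" "\<not> lin_dep (set b)" "set b \<subseteq> carrier_vec n" "hd b = v" "length b = n"
    by auto
  moreover from this obtain vs where bv: "b = v # vs" using n by (cases b) auto
  define ws where "ws = gram_schmidt n b"
  ultimately have ws: "set ws \<subseteq> carrier_vec n" "corthogonal ws" "length ws = n"
    and "hd ws = v"
    using gram_schmidt_result[of b ws] gram_schmidt_hd[OF v, of vs] unfolding ws_def bv
    by auto
  hence "ws ! 0 = v" using n by (cases ws) auto
  moreover note U = orthogonal_mat_of_corthogonal[OF ws]
  ultimately show thesis by (intro that[OF U(1,2)]) (simp add: U(3)[OF n])
qed

lemma orthogonal_conj_eigen_first_col:
  fixes A U :: "real mat"
  assumes A: "A \<in> carrier_mat n n" and U: "U \<in> carrier_mat n n" and UU: "U\<^sup>T * U = 1\<^sub>m n"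
    and eigen: "A *\<^sub>v col U 0 = e \<cdot>\<^sub>v col U 0" and i: "i < n" and n: "0 < n"
  shows "(U\<^sup>T * A * U) $$ (i, 0) = (if i = 0 then e else 0)"
proof -
  have "(U\<^sup>T * A * U) $$ (i, 0) = col U i \<bullet> (A *\<^sub>v col U 0)"
    using U A i n by (simp add: assoc_mult_mat[of _ n n _ n _ n] col_mult2[of _ n n _ n] mult_mat_vec_def)
  also have "\<dots> = e * (U\<^sup>T * U) $$ (i, 0)"
    using U i n by (simp add: eigen)
  finally show ?thesis using UU i n by simp
qed

lemma orthogonal_diag_extend:
  fixes W :: "real mat"
  assumes W: "W \<in> carrier_mat m m" and WW: "W\<^sup>T * W = 1\<^sub>m m" and es: "length es = m"
  defines "B \<equiv> four_block_mat (1\<^sub>m 1) (0\<^sub>m 1 m) (0\<^sub>m m 1) W"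
  shows "B \<in> carrier_mat (Suc m) (Suc m)" and "B\<^sup>T * B = 1\<^sub>m (Suc m)"
    and "B * diag_of_list (e # es) * B\<^sup>T =
      four_block_mat (Matrix.mat 1 1 (\<lambda>_. e)) (0\<^sub>m 1 m) (0\<^sub>m m 1) (W * diag_of_list es * W\<^sup>T)"
proof -
  have D: "diag_of_list es \<in> carrier_mat m m" using diag_of_list_carrier[of es] unfolding es .
  have Bt: "B\<^sup>T = four_block_mat (1\<^sub>m 1) (0\<^sub>m 1 m) (0\<^sub>m m 1) W\<^sup>T"
    unfolding B_def using W by (subst transpose_four_block_mat[of _ 1 1 _ m _ m]) auto
  show "B \<in> carrier_mat (Suc m) (Suc m)"
    unfolding B_def using four_block_carrier_mat[OF one_carrier_mat W, of 1] by simp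
  show "B\<^sup>T * B = 1\<^sub>m (Suc m)"
    unfolding Bt unfolding B_def using W WW
    by (subst mult_four_block_mat[of _ 1 1 _ m _ m _ _ 1 _ m]) auto
  show "B * diag_of_list (e # es) * B\<^sup>T = four_block_mat (Matrix.mat 1 1 (\<lambda>_. e)) (0\<^sub>m 1 m) (0\<^sub>m m 1)
      (W * diag_of_list es * W\<^sup>T)"
    unfolding Bt diag_of_list_Cons es unfolding B_def using W D
    by (subst mult_four_block_mat[of _ 1 1 _ m _ m _ _ 1 _ m], auto,
        subst mult_four_block_mat[of _ 1 1 _ m _ m _ _ 1 _ m], auto)
qed


lemma real_sym_deflation:
  fixes A :: "real mat"
  assumes A: "A \<in> carrier_mat (Suc m) (Suc m)" and sym: "A\<^sup>T = A" and e: "poly (char_poly A) e = 0"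
  obtains U A3 where "U \<in> carrier_mat (Suc m) (Suc m)" "U\<^sup>T * U = 1\<^sub>m (Suc m)"
    "A3 \<in> carrier_mat m m" "A3\<^sup>T = A3"
    "U\<^sup>T * A * U = four_block_mat (Matrix.mat 1 1 (\<lambda>_. e)) (0\<^sub>m 1 m) (0\<^sub>m m 1) A3"
proof -
  have "eigenvalue A e" using e eigenvalue_root_char_poly[OF A] by simp
  hence "eigenvector A (find_eigenvector A e) e" using find_eigenvector[OF A] by blast
  then obtain v where v: "v \<in> carrier_vec (Suc m)" "v \<noteq> 0\<^sub>v (Suc m)" and Av: "A *\<^sub>v v = e \<cdot>\<^sub>v v"
    using A unfolding eigenvector_def by auto
  obtain U c where U: "U \<in> carrier_mat (Suc m) (Suc m)" and UU: "U\<^sup>T * U = 1\<^sub>m (Suc m)"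
    and U0: "col U 0 = c \<cdot>\<^sub>v v"
    using orthogonal_mat_with_first_col[OF v] by blast
  have eigen: "A *\<^sub>v col U 0 = e \<cdot>\<^sub>v col U 0"
    unfolding U0 using A v Av by (simp add: mult_mat_vec smult_smult_assoc mult.commute)
  define A' where "A' = U\<^sup>T * A * U"
  have A': "A' \<in> carrier_mat (Suc m) (Suc m)" unfolding A'_def using U A by auto
  have A'_sym: "A'\<^sup>T = A'"
    unfolding A'_def using U A sym
    by (simp add: transpose_mult[of _ "Suc m" "Suc m" _ "Suc m"]
        assoc_mult_mat[of _ "Suc m" "Suc m" _ "Suc m" _ "Suc m"])
  have A'_col0: "A' $$ (i, 0) = (if i = 0 then e else 0)" if "i < Suc m" for i
    unfolding A'_def by (rule orthogonal_conj_eigen_first_col[OF A U UU eigen that]) simp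
  define A3 where "A3 = Matrix.mat m m (\<lambda>(i, j). A' $$ (Suc i, Suc j))"
  have "A3 \<in> carrier_mat m m" "A3\<^sup>T = A3"
    by (auto intro!: eq_matI simp: A3_def sym_mat_entry[OF A'_sym A'])
  moreover have "A' = four_block_mat (Matrix.mat 1 1 (\<lambda>_. e)) (0\<^sub>m 1 m) (0\<^sub>m m 1) A3"
    by (rule eq_matI) (use A' A'_col0 sym_mat_entry[OF A'_sym A'] in \<open>auto simp: A3_def\<close>)
  ultimately show thesis using that U UU unfolding A'_def by blast
qed

theorem real_sym_spectral_decomposition:
  fixes A :: "real mat"
  assumes "A \<in> carrier_mat n n" "A\<^sup>T = A"
  shows "\<exists>W es. W \<in> carrier_mat n n \<and> W\<^sup>T * W = 1\<^sub>m n \<and> length es = n \<and> sorted es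
     \<and> A = W * diag_of_list es * W\<^sup>T"
  using assms
proof (induct n arbitrary: A)
  case 0
  show ?case
    by (rule exI[of _ "1\<^sub>m 0"], rule exI[of _ "[]"])
      (use 0 in \<open>auto intro!: eq_matI simp: diag_of_list_def\<close>)
next
  case (Suc m A)
  hence A: "A \<in> carrier_mat (Suc m) (Suc m)" and sym: "A\<^sup>T = A" by auto
  txt \<open>Splitting off the smallest eigenvalue first makes the eigenvalue list sorted.\<close>
  define R where "R = {x. poly (char_poly A) x = 0}"
  have "char_poly A \<noteq> 0"
    using degree_monic_char_poly[OF A] by (metis coeff_0 zero_neq_one)
  hence "finite R" unfolding R_def using poly_roots_finite by blast
  moreover have "R \<noteq> {}" using real_sym_char_poly_has_root[OF A sym] unfolding R_def by auto
  ultimately have "Min R \<in> R" and e_min: "\<And>x. x \<in> R \<Longrightarrow> Min R \<le> x" by simp_all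
  obtain U A3 where U: "U \<in> carrier_mat (Suc m) (Suc m)" and UU: "U\<^sup>T * U = 1\<^sub>m (Suc m)"
    and A3: "A3 \<in> carrier_mat m m" "A3\<^sup>T = A3"
    and A_block: "U\<^sup>T * A * U = four_block_mat (Matrix.mat 1 1 (\<lambda>_. Min R)) (0\<^sub>m 1 m) (0\<^sub>m m 1) A3"
    using real_sym_deflation[OF A sym, of "Min R"] \<open>Min R \<in> R\<close> unfolding R_def by blast
  from Suc(1)[OF A3] obtain W3 es3 where W3: "W3 \<in> carrier_mat m m"
    and W3W3: "W3\<^sup>T * W3 = 1\<^sub>m m" and es3: "length es3 = m" "sorted es3"
    and A3_eq: "A3 = W3 * diag_of_list es3 * W3\<^sup>T" by blast
  define es where "es = Min R # es3"
  define B where "B = four_block_mat (1\<^sub>m 1) (0\<^sub>m 1 m) (0\<^sub>m m 1) W3"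
  note B = orthogonal_diag_extend[OF W3 W3W3 es3(1), folded B_def]
  define W where "W = U * B"
  have W: "W \<in> carrier_mat (Suc m) (Suc m)" unfolding W_def using U B(1) by auto
  have "W\<^sup>T * W = B\<^sup>T * (U\<^sup>T * U) * B"
    unfolding W_def using U B(1)
    by (simp add: transpose_mult[of _ "Suc m" "Suc m" _ "Suc m"]
        assoc_mult_mat[of _ "Suc m" "Suc m" _ "Suc m" _ "Suc m"])
  hence WW: "W\<^sup>T * W = 1\<^sub>m (Suc m)" using UU B by simp
  have D: "diag_of_list es \<in> carrier_mat (Suc m) (Suc m)"
    using diag_of_list_carrier[of es] es3 by (simp add: es_def)
  have "A = (U * U\<^sup>T) * A * (U * U\<^sup>T)"
    using orthogonal_mat_right_inverse[OF U UU] A by simp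
  also have "\<dots> = U * (U\<^sup>T * A * U) * U\<^sup>T"
    using U A by (simp add: assoc_mult_mat[of _ "Suc m" "Suc m" _ "Suc m" _ "Suc m"])
  also have "\<dots> = W * diag_of_list es * W\<^sup>T"
    unfolding A_block A3_eq B(3)[symmetric] W_def es_def[symmetric] using U B(1) D
    by (simp add: transpose_mult[of _ "Suc m" "Suc m" _ "Suc m"]
        assoc_mult_mat[of _ "Suc m" "Suc m" _ "Suc m" _ "Suc m"])
  finally have A_eq: "A = W * diag_of_list es * W\<^sup>T" .
  have "Min R \<le> x" if "x \<in> set es3" for x
  proof -
    have "char_poly A = (\<Prod>a\<leftarrow>es. [:- a, 1:])"
      unfolding A_eq by (rule char_poly_orthogonal_diag[OF W WW]) (simp add: es_def es3)
    hence "poly (char_poly A) x = 0"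
      using that by (simp add: es_def poly_prod_list prod_list_zero_iff)
    thus ?thesis using e_min unfolding R_def by auto
  qed
  hence "sorted es" using es3 by (simp add: es_def)
  thus ?case using W WW es3 A_eq by (intro exI[of _ W] exI[of _ es]) (simp add: es_def)
qed

section \<open>The \<open>k\<close>-th smallest eigenvalue and the kernel\<close>

lemma mult_mat_vec_zero: "A \<in> carrier_mat n m \<Longrightarrow> A *\<^sub>v 0\<^sub>v m = (0\<^sub>v n :: 'a :: semiring_0 Matrix.vec)"
  by (auto intro!: eq_vecI simp: scalar_prod_def)

lemma mult_mat_vec_orthogonal_inverse:
  fixes W :: "real mat"
  assumes "W \<in> carrier_mat n n" "W\<^sup>T * W = 1\<^sub>m n" "x \<in> carrier_vec n"
  shows "W *\<^sub>v (W\<^sup>T *\<^sub>v x) = x" and "W\<^sup>T *\<^sub>v (W *\<^sub>v x) = x"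
  using assms orthogonal_mat_right_inverse[OF assms(1,2)]
  by (metis assoc_mult_mat_vec one_mult_mat_vec transpose_carrier_mat)+

lemma quadratic_form_orthogonal_diag:
  fixes W :: "real mat"
  assumes W: "W \<in> carrier_mat n n" and es: "length es = n" and x: "x \<in> carrier_vec n"
  shows "x \<bullet> ((W * diag_of_list es * W\<^sup>T) *\<^sub>v x) = (\<Sum>l<n. es ! l * ((W\<^sup>T *\<^sub>v x) $ l)\<^sup>2)"
proof -
  have D: "diag_of_list es \<in> carrier_mat n n" using diag_of_list_carrier[of es] unfolding es .
  have "(W * diag_of_list es * W\<^sup>T) *\<^sub>v x = W *\<^sub>v (diag_of_list es *\<^sub>v (W\<^sup>T *\<^sub>v x))"
    using W D x by (simp add: assoc_mult_mat_vec[of _ n n _ n])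
  hence "x \<bullet> ((W * diag_of_list es * W\<^sup>T) *\<^sub>v x) = (W\<^sup>T *\<^sub>v x) \<bullet> (diag_of_list es *\<^sub>v (W\<^sup>T *\<^sub>v x))"
    using transpose_vec_mult_scalar[OF W, of "diag_of_list es *\<^sub>v (W\<^sup>T *\<^sub>v x)" x] W D x by simp
  also have "\<dots> = (\<Sum>l<n. (W\<^sup>T *\<^sub>v x) $ l * (diag_of_list es *\<^sub>v (W\<^sup>T *\<^sub>v x)) $ l)"
    using W D by (simp add: scalar_prod_def atLeast0LessThan)
  also have "\<dots> = (\<Sum>l<n. es ! l * ((W\<^sup>T *\<^sub>v x) $ l)\<^sup>2)"
  proof (rule sum.cong[OF refl])
    fix l assume "l \<in> {..<n}"
    moreover have "W\<^sup>T *\<^sub>v x \<in> carrier_vec (length es)" unfolding es using W x by simp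
    ultimately show "(W\<^sup>T *\<^sub>v x) $ l * (diag_of_list es *\<^sub>v (W\<^sup>T *\<^sub>v x)) $ l
        = es ! l * ((W\<^sup>T *\<^sub>v x) $ l)\<^sup>2"
      using es by (simp add: mult_vec_diag_of_list power2_eq_square)
  qed
  finally show ?thesis .
qed

lemma sprod_self_orthogonal:
  fixes W :: "real mat"
  assumes W: "W \<in> carrier_mat n n" and WW: "W\<^sup>T * W = 1\<^sub>m n" and x: "x \<in> carrier_vec n"
  shows "x \<bullet> x = (\<Sum>l<n. ((W\<^sup>T *\<^sub>v x) $ l)\<^sup>2)"
proof -
  have "x \<bullet> x = x \<bullet> (W *\<^sub>v (W\<^sup>T *\<^sub>v x))"
    using mult_mat_vec_orthogonal_inverse(1)[OF assms] by simp
  also have "\<dots> = (W\<^sup>T *\<^sub>v x) \<bullet> (W\<^sup>T *\<^sub>v x)"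
    using transpose_vec_mult_scalar[OF W, of "W\<^sup>T *\<^sub>v x" x] W x by simp
  also have "\<dots> = (\<Sum>l<n. ((W\<^sup>T *\<^sub>v x) $ l)\<^sup>2)"
    using W by (auto simp: scalar_prod_def atLeast0LessThan power2_eq_square)
  finally show ?thesis .
qed

lemma kth_smallest_eig_orthogonal_diag:
  fixes W :: "real mat"
  assumes "W \<in> carrier_mat n n" "W\<^sup>T * W = 1\<^sub>m n" "length es = n" "sorted es"
  shows "kth_smallest_eig k (W * diag_of_list es * W\<^sup>T) = es ! (k - 1)"
  unfolding kth_smallest_eig_def char_poly_orthogonal_diag[OF assms(1-3)] proots_prod_linear_factors
  using assms(4) by (simp add: sorted_list_of_multiset_mset sorted_sort_id)

lemma psd_orthogonal_diag_eigenvalue_nonneg: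
  fixes W :: "real mat"
  assumes W: "W \<in> carrier_mat n n" and WW: "W\<^sup>T * W = 1\<^sub>m n" and es: "length es = n"
    and psd: "\<And>x. x \<in> carrier_vec n \<Longrightarrow> x \<bullet> ((W * diag_of_list es * W\<^sup>T) *\<^sub>v x) \<ge> 0"
    and l: "l < n"
  shows "es ! l \<ge> 0"
proof -
  define x where "x = W *\<^sub>v unit_vec n l"
  have x: "x \<in> carrier_vec n" unfolding x_def using W by simp
  have "W\<^sup>T *\<^sub>v x = unit_vec n l"
    unfolding x_def by (rule mult_mat_vec_orthogonal_inverse(2)[OF W WW]) simp
  hence "x \<bullet> ((W * diag_of_list es * W\<^sup>T) *\<^sub>v x) = (\<Sum>i<n. es ! i * (if i = l then 1 else 0))"
    unfolding quadratic_form_orthogonal_diag[OF W es x] by (auto intro!: sum.cong simp: unit_vec_def)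
  also have "\<dots> = es ! l" using l by (simp add: if_distrib[of "\<lambda>x. _ * x"] cong: if_cong)
  finally show ?thesis using psd[OF x] by simp
qed

lemma psd_kth_smallest_eig_nonneg:
  fixes A :: "real mat"
  assumes A: "A \<in> carrier_mat n n" and sym: "A\<^sup>T = A"
    and psd: "\<And>x. x \<in> carrier_vec n \<Longrightarrow> x \<bullet> (A *\<^sub>v x) \<ge> 0"
    and k: "1 \<le> k" "k \<le> n"
  shows "kth_smallest_eig k A \<ge> 0"
proof -
  obtain W es where W: "W \<in> carrier_mat n n" and WW: "W\<^sup>T * W = 1\<^sub>m n" and es: "length es = n"
    and "sorted es" and A_eq: "A = W * diag_of_list es * W\<^sup>T"
    using real_sym_spectral_decomposition[OF A sym] by blast
  have "kth_smallest_eig k A = es ! (k - 1)"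
    unfolding A_eq by (rule kth_smallest_eig_orthogonal_diag) fact+
  also have "\<dots> \<ge> 0"
    using psd_orthogonal_diag_eigenvalue_nonneg[OF W WW es, of "k - 1"] psd k unfolding A_eq by simp
  finally show ?thesis .
qed

lemma orthogonal_diag_kernel_coords:
  fixes W :: "real mat"
  assumes W: "W \<in> carrier_mat n n" and WW: "W\<^sup>T * W = 1\<^sub>m n" and es: "length es = n" "sorted es"
    and pos: "es ! (k - 1) > 0" and z: "z \<in> carrier_vec n"
    and ker: "(W * diag_of_list es * W\<^sup>T) *\<^sub>v z = 0\<^sub>v n" and l: "k - 1 \<le> l" "l < n"
  shows "(W\<^sup>T *\<^sub>v z) $ l = 0"
proof -
  have D: "diag_of_list es \<in> carrier_mat n n" using diag_of_list_carrier[of es] unfolding es .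
  have "diag_of_list es *\<^sub>v (W\<^sup>T *\<^sub>v z) = W\<^sup>T *\<^sub>v ((W * diag_of_list es * W\<^sup>T) *\<^sub>v z)"
    using W D z by (simp add: assoc_mult_mat_vec[of _ n n _ n] mult_mat_vec_orthogonal_inverse(2)[OF W WW])
  also have "\<dots> = 0\<^sub>v n" unfolding ker using mult_mat_vec_zero[of "W\<^sup>T" n n] W by simp
  finally have "es ! l * (W\<^sup>T *\<^sub>v z) $ l = 0"
    using mult_vec_diag_of_list[of "W\<^sup>T *\<^sub>v z" es l] W z es l by simp
  moreover have "es ! l \<ge> es ! (k - 1)" using sorted_nth_mono[OF es(2) l(1)] l es by simp
  ultimately show ?thesis using pos by simp
qed

lemma orthogonal_diag_residual_bound:
  fixes W :: "real mat"
  assumes W: "W \<in> carrier_mat n n" and WW: "W\<^sup>T * W = 1\<^sub>m n" and es: "length es = n" "sorted es"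
    and x: "x \<in> carrier_vec n" and low: "\<And>l. l < k - 1 \<Longrightarrow> (W\<^sup>T *\<^sub>v x) $ l = 0"
  shows "es ! (k - 1) * (x \<bullet> x) \<le> x \<bullet> ((W * diag_of_list es * W\<^sup>T) *\<^sub>v x)"
proof -
  have "es ! (k - 1) * (x \<bullet> x) = (\<Sum>l<n. es ! (k - 1) * ((W\<^sup>T *\<^sub>v x) $ l)\<^sup>2)"
    unfolding sprod_self_orthogonal[OF W WW x] by (simp add: sum_distrib_left)
  also have "\<dots> \<le> (\<Sum>l<n. es ! l * ((W\<^sup>T *\<^sub>v x) $ l)\<^sup>2)"
  proof (rule sum_mono)
    fix l assume "l \<in> {..<n}"
    thus "es ! (k - 1) * ((W\<^sup>T *\<^sub>v x) $ l)\<^sup>2 \<le> es ! l * ((W\<^sup>T *\<^sub>v x) $ l)\<^sup>2"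
      using low[of l] sorted_nth_mono[OF es(2), of "k - 1" l] es
      by (cases "l < k - 1") (auto intro: mult_right_mono)
  qed
  also have "\<dots> = x \<bullet> ((W * diag_of_list es * W\<^sup>T) *\<^sub>v x)"
    by (rule quadratic_form_orthogonal_diag[OF W es(1) x, symmetric])
  finally show ?thesis .
qed

lemma mult_mat_vec_surj_if_inj:
  fixes M :: "real mat"
  assumes M: "M \<in> carrier_mat m m"
    and inj: "\<And>c. c \<in> carrier_vec m \<Longrightarrow> M *\<^sub>v c = 0\<^sub>v m \<Longrightarrow> c = 0\<^sub>v m"
    and t: "t \<in> carrier_vec m"
  obtains c where "c \<in> carrier_vec m" "M *\<^sub>v c = t"
proof -
  have "Determinant.det M \<noteq> 0" using det_0_iff_vec_prod_zero[OF M] inj by blast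
  from det_non_zero_imp_unit[OF M this] obtain N where N: "N \<in> carrier_mat m m" and MN: "M * N = 1\<^sub>m m"
    unfolding Units_def ring_mat_def by auto
  have "M *\<^sub>v (N *\<^sub>v t) = t" using M N t MN by (metis assoc_mult_mat_vec one_mult_mat_vec)
  thus thesis using that[of "N *\<^sub>v t"] N t by simp
qed

lemma quadratic_form_diff_kernel:
  fixes A :: "real mat"
  assumes A: "A \<in> carrier_mat n n" and sym: "A\<^sup>T = A" and w: "w \<in> carrier_vec n"
    and z: "z \<in> carrier_vec n" and ker: "A *\<^sub>v z = 0\<^sub>v n"
  shows "(w - z) \<bullet> (A *\<^sub>v (w - z)) = w \<bullet> (A *\<^sub>v w)"
proof -
  have "A *\<^sub>v (w - z) = A *\<^sub>v w" using A w z ker by (simp add: mult_minus_distrib_mat_vec)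
  moreover have "z \<bullet> (A *\<^sub>v w) = 0"
    using transpose_vec_mult_scalar[OF A w z] sym ker w by simp
  ultimately show ?thesis using w z A by (simp add: minus_scalar_prod_distrib)
qed

text \<open>As \<open>\<lambda>\<^sub>k > 0\<close>, the kernel lies in the span of the first \<open>k - 1\<close> eigenvectors, so the
  injective \<open>G\<close> maps onto that span.\<close>
lemma orthogonal_diag_kernel_fit:
  fixes W G :: "real mat"
  assumes W: "W \<in> carrier_mat n n" and WW: "W\<^sup>T * W = 1\<^sub>m n" and es: "length es = n" "sorted es"
    and pos: "es ! (k - 1) > 0" and G: "G \<in> carrier_mat n (k - 1)"
    and ker: "\<And>c. c \<in> carrier_vec (k - 1) \<Longrightarrow> (W * diag_of_list es * W\<^sup>T) *\<^sub>v (G *\<^sub>v c) = 0\<^sub>v n"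
    and inj: "\<And>c. c \<in> carrier_vec (k - 1) \<Longrightarrow> G *\<^sub>v c = 0\<^sub>v n \<Longrightarrow> c = 0\<^sub>v (k - 1)"
    and k: "k \<le> n" and w: "w \<in> carrier_vec n"
  obtains c where "c \<in> carrier_vec (k - 1)" "\<And>l. l < k - 1 \<Longrightarrow> (W\<^sup>T *\<^sub>v (w - G *\<^sub>v c)) $ l = 0"
proof -
  define M where "M = Matrix.mat (k - 1) (k - 1) (\<lambda>(l, t). (W\<^sup>T * G) $$ (l, t))"
  have M: "M \<in> carrier_mat (k - 1) (k - 1)" unfolding M_def by simp
  have Mc: "(M *\<^sub>v c) $ l = (W\<^sup>T *\<^sub>v (G *\<^sub>v c)) $ l" if "c \<in> carrier_vec (k - 1)" "l < k - 1" for c l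
    using that W G k by (auto simp: M_def scalar_prod_def assoc_mult_mat_vec[symmetric, of _ n n G]
        simp del: assoc_mult_mat_vec)
  have M_inj: "c = 0\<^sub>v (k - 1)" if c: "c \<in> carrier_vec (k - 1)" and Mc0: "M *\<^sub>v c = 0\<^sub>v (k - 1)" for c
  proof -
    have "W\<^sup>T *\<^sub>v (G *\<^sub>v c) = 0\<^sub>v n"
    proof (rule eq_vecI)
      fix l assume "l < dim_vec (0\<^sub>v n :: real Matrix.vec)"
      thus "(W\<^sup>T *\<^sub>v (G *\<^sub>v c)) $ l = 0\<^sub>v n $ l"
        using Mc[OF c, of l] Mc0 orthogonal_diag_kernel_coords[OF W WW es pos _ ker[OF c], of l] G c
        by (cases "l < k - 1") auto
    qed (use W in simp)
    hence "G *\<^sub>v c = 0\<^sub>v n"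
      using mult_mat_vec_orthogonal_inverse(1)[OF W WW, of "G *\<^sub>v c"] mult_mat_vec_zero[OF W] G c
      by simp
    thus ?thesis by (rule inj[OF c])
  qed
  obtain c where c: "c \<in> carrier_vec (k - 1)"
    and Mc_eq: "M *\<^sub>v c = Matrix.vec (k - 1) (\<lambda>l. (W\<^sup>T *\<^sub>v w) $ l)"
    using mult_mat_vec_surj_if_inj[OF M M_inj vec_carrier] by blast
  have "(W\<^sup>T *\<^sub>v (w - G *\<^sub>v c)) $ l = 0" if "l < k - 1" for l
    using that Mc[OF c that] Mc_eq W w G c k by (simp add: mult_minus_distrib_mat_vec)
  with c show thesis by (rule that)
qed

lemma kth_smallest_eig_residual_bound:
  fixes A G :: "real mat"
  assumes A: "A \<in> carrier_mat n n" and sym: "A\<^sup>T = A"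
    and G: "G \<in> carrier_mat n (k - 1)"
    and ker: "\<And>c. c \<in> carrier_vec (k - 1) \<Longrightarrow> A *\<^sub>v (G *\<^sub>v c) = 0\<^sub>v n"
    and inj: "\<And>c. c \<in> carrier_vec (k - 1) \<Longrightarrow> G *\<^sub>v c = 0\<^sub>v n \<Longrightarrow> c = 0\<^sub>v (k - 1)"
    and k: "k \<le> n" and pos: "kth_smallest_eig k A > 0"
    and w: "w \<in> carrier_vec n"
  obtains c where "c \<in> carrier_vec (k - 1)"
    "kth_smallest_eig k A * ((w - G *\<^sub>v c) \<bullet> (w - G *\<^sub>v c)) \<le> w \<bullet> (A *\<^sub>v w)"
proof -
  obtain W es where W: "W \<in> carrier_mat n n" and WW: "W\<^sup>T * W = 1\<^sub>m n" and es: "length es = n"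
    "sorted es" and A_eq: "A = W * diag_of_list es * W\<^sup>T"
    using real_sym_spectral_decomposition[OF A sym] by blast
  have lam: "kth_smallest_eig k A = es ! (k - 1)"
    unfolding A_eq by (rule kth_smallest_eig_orthogonal_diag) fact+
  obtain c where c: "c \<in> carrier_vec (k - 1)"
    and low: "\<And>l. l < k - 1 \<Longrightarrow> (W\<^sup>T *\<^sub>v (w - G *\<^sub>v c)) $ l = 0"
    by (rule orthogonal_diag_kernel_fit[OF W WW es _ G _ inj k w])
      (use pos ker in \<open>simp_all add: lam flip: A_eq\<close>)
  have Gc: "G *\<^sub>v c \<in> carrier_vec n" using G c by simp
  have "es ! (k - 1) * ((w - G *\<^sub>v c) \<bullet> (w - G *\<^sub>v c)) \<le>
      (w - G *\<^sub>v c) \<bullet> ((W * diag_of_list es * W\<^sup>T) *\<^sub>v (w - G *\<^sub>v c))"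
    by (rule orthogonal_diag_residual_bound[OF W WW es _ low]) (use w Gc in simp)
  hence "kth_smallest_eig k A * ((w - G *\<^sub>v c) \<bullet> (w - G *\<^sub>v c)) \<le>
      (w - G *\<^sub>v c) \<bullet> (A *\<^sub>v (w - G *\<^sub>v c))"
    unfolding lam unfolding A_eq .
  also have "\<dots> = w \<bullet> (A *\<^sub>v w)" by (rule quadratic_form_diff_kernel[OF A sym w Gc ker[OF c]])
  finally show thesis using c that by blast
qed


section \<open>Block indexing and marginals\<close>

definition block_offset :: "(nat \<Rightarrow> nat) \<Rightarrow> nat \<Rightarrow> nat" where
  "block_offset r i = (\<Sum>j<i. r j)"

lemma block_offset_Suc: "block_offset r (Suc i) = block_offset r i + r i"
  unfolding block_offset_def by simp

lemma block_offset_mono: "i \<le> j \<Longrightarrow> block_offset r i \<le> block_offset r j"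
  unfolding block_offset_def by (rule sum_mono2) auto

lemma block_offset_add_less: "i < k \<Longrightarrow> a < r i \<Longrightarrow> block_offset r i + a < block_offset r k"
  using block_offset_mono[of "Suc i" k r] block_offset_Suc[of r i] by simp

lemma blk_block_offset_add: assumes "a < r i" shows "blk r (block_offset r i + a) = i"
  unfolding blk_def
proof (rule Least_equality)
  show "block_offset r i + a < (\<Sum>j<Suc i. r j)"
    using assms block_offset_Suc[of r i] unfolding block_offset_def by simp
  fix y assume y: "block_offset r i + a < (\<Sum>j<Suc y. r j)"
  show "i \<le> y"
  proof (rule ccontr)
    assume "\<not> i \<le> y"
    hence "block_offset r (Suc y) \<le> block_offset r i" by (intro block_offset_mono) simp
    thus False using y unfolding block_offset_def by simp
  qed
qed

lemma pos_block_offset_add: "a < r i \<Longrightarrow> pos r (block_offset r i + a) = a"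
  unfolding pos_def by (simp add: blk_block_offset_add block_offset_def[symmetric])

lemma sum_lessThan_add: "(\<Sum>p<(x::nat) + y. g p) = (\<Sum>p<x. g p) + (\<Sum>a<y. g (x + a))"
  by (induct y) (auto simp: add.assoc)

lemma sum_lessThan_block_offset:
  "(\<Sum>p<block_offset r k. g p) = (\<Sum>i<k. \<Sum>a<r i. g (block_offset r i + a))"
  by (induct k) (auto simp: block_offset_Suc sum_lessThan_add block_offset_def)

lemma block_offset_decompose:
  "p < block_offset r k \<Longrightarrow> \<exists>i a. i < k \<and> a < r i \<and> p = block_offset r i + a"
proof (induct k)
  case (Suc k)
  show ?case
  proof (cases "p < block_offset r k")
    case True thus ?thesis using Suc by (meson less_SucI)
  next
    case False thus ?thesis using Suc(2) unfolding block_offset_Suc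
      by (intro exI[of _ k] exI[of _ "p - block_offset r k"]) auto
  qed
qed (simp add: block_offset_def)

lemma blk_pos_less:
  assumes "p < block_offset r k"
  shows "blk r p < k" "pos r p < r (blk r p)" "p = block_offset r (blk r p) + pos r p"
  using block_offset_decompose[OF assms] blk_block_offset_add pos_block_offset_add by force+

lemma finite_sample_space: "finite (sample_space k r)"
  unfolding sample_space_def by (rule finite_PiE) auto

lemma sample_space_less: "x \<in> sample_space k r \<Longrightarrow> i < k \<Longrightarrow> x i < r i"
  unfolding sample_space_def by (auto simp: PiE_def Pi_def)

lemma sample_space_dim_pos:
  assumes "set_pmf R \<subseteq> sample_space k r" and "i < k"
  shows "r i > 0"
proof -
  obtain x where "x \<in> set_pmf R" using set_pmf_not_empty[of R] by blast
  thus ?thesis using assms sample_space_less[of x k r i] by auto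
qed

lemma expectation_eq_sum_sample_space:
  assumes "set_pmf R \<subseteq> sample_space k r"
  shows "measure_pmf.expectation R h = (\<Sum>x\<in>sample_space k r. h x * pmf R x)"
  by (rule integral_measure_pmf_real[OF finite_sample_space]) (use assms in auto)

lemma prob_eq_sum_sample_space:
  assumes "set_pmf R \<subseteq> sample_space k r"
  shows "measure_pmf.prob R A = (\<Sum>x\<in>sample_space k r. (if x \<in> A then 1 else 0) * pmf R x)"
proof -
  have "measure_pmf.prob R A = measure_pmf.prob R (A \<inter> set_pmf R)"
    by (simp add: measure_Int_set_pmf)
  also have "A \<inter> set_pmf R = (A \<inter> sample_space k r) \<inter> set_pmf R" using assms by auto
  also have "measure_pmf.prob R \<dots> = measure_pmf.prob R (A \<inter> sample_space k r)"
    by (simp add: measure_Int_set_pmf)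
  also have "\<dots> = sum (pmf R) (A \<inter> sample_space k r)"
    by (rule measure_measure_pmf_finite) (use finite_sample_space in auto)
  also have "\<dots> = (\<Sum>x\<in>sample_space k r. (if x \<in> A then 1 else 0) * pmf R x)"
    using finite_sample_space[of k r]
    by (simp add: sum.inter_restrict[symmetric] Int_commute if_distrib[of "\<lambda>x. x * _"] cong: if_cong)
  finally show ?thesis .
qed

lemma marg_eq_sum:
  "set_pmf R \<subseteq> sample_space k r \<Longrightarrow>
    marg R i a = (\<Sum>x\<in>sample_space k r. (if x i = a then 1 else 0) * pmf R x)"
  unfolding marg_def by (subst prob_eq_sum_sample_space) auto

lemma marg2_eq_sum:
  "set_pmf R \<subseteq> sample_space k r \<Longrightarrow>
    marg2 R i a j b = (\<Sum>x\<in>sample_space k r. (if x i = a \<and> x j = b then 1 else 0) * pmf R x)"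
  unfolding marg2_def by (subst prob_eq_sum_sample_space) auto

lemma marg2_same: "marg2 R i a i b = (if a = b then marg R i a else 0)"
proof (cases "a = b")
  case False
  hence "{x. x i = a \<and> x i = b} = {}" by auto
  thus ?thesis using False unfolding marg2_def by (simp only:) simp
qed (simp add: marg2_def marg_def)

lemma marg2_commute: "marg2 R i a j b = marg2 R j b i a"
  unfolding marg2_def by (simp add: conj_commute)

lemma sum_pmf_coord_eq_marg:
  assumes R: "set_pmf R \<subseteq> sample_space k r" and i: "i < k"
  shows "(\<Sum>x\<in>sample_space k r. f (x i) * pmf R x) = (\<Sum>a<r i. f a * marg R i a)"
proof -
  have "(\<Sum>a<r i. f a * marg R i a) =
      (\<Sum>a<r i. \<Sum>x\<in>sample_space k r. (if x i = a then f a else 0) * pmf R x)"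
    unfolding marg_eq_sum[OF R] by (auto simp: sum_distrib_left intro!: sum.cong)
  also have "\<dots> = (\<Sum>x\<in>sample_space k r. \<Sum>a<r i. (if a = x i then f (x i) * pmf R x else 0))"
    by (subst sum.swap) (auto intro!: sum.cong)
  also have "\<dots> = (\<Sum>x\<in>sample_space k r. f (x i) * pmf R x)"
    by (rule sum.cong[OF refl]) (use sample_space_less[OF _ i] in \<open>simp add: sum.delta\<close>)
  finally show ?thesis by simp
qed

lemma sum_pmf_coord_pair_eq_marg2:
  assumes R: "set_pmf R \<subseteq> sample_space k r" and i: "i < k" and j: "j < k"
  shows "(\<Sum>x\<in>sample_space k r. f (x i) (x j) * pmf R x) =
    (\<Sum>a<r i. \<Sum>b<r j. f a b * marg2 R i a j b)"
proof -
  let ?g = "\<lambda>x a b. (if x i = a \<and> x j = b then f a b else 0) * pmf R x"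
  have "(\<Sum>a<r i. \<Sum>b<r j. f a b * marg2 R i a j b) = (\<Sum>a<r i. \<Sum>b<r j. \<Sum>x\<in>sample_space k r. ?g x a b)"
    unfolding marg2_eq_sum[OF R] by (auto simp: sum_distrib_left intro!: sum.cong)
  also have "\<dots> = (\<Sum>x\<in>sample_space k r. \<Sum>a<r i. \<Sum>b<r j. ?g x a b)"
    by (subst sum.swap, rule sum.cong[OF refl], rule sum.swap)
  also have "\<dots> = (\<Sum>x\<in>sample_space k r. f (x i) (x j) * pmf R x)"
  proof (rule sum.cong[OF refl])
    fix x assume x: "x \<in> sample_space k r"
    have g: "?g x a b = (if a = x i then if b = x j then f (x i) (x j) * pmf R x else 0 else 0)" for a b
      by auto
    have "(\<Sum>a<r i. \<Sum>b<r j. ?g x a b) =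
        (\<Sum>a<r i. if a = x i then (\<Sum>b<r j. if b = x j then f (x i) (x j) * pmf R x else 0) else 0)"
      unfolding g by (rule sum.cong[OF refl]) simp
    thus "(\<Sum>a<r i. \<Sum>b<r j. ?g x a b) = f (x i) (x j) * pmf R x"
      using sample_space_less[OF x i] sample_space_less[OF x j] by (simp add: sum.delta)
  qed
  finally show ?thesis by simp
qed

lemma sum_marg2_right:
  assumes R: "set_pmf R \<subseteq> sample_space k r" and j: "j < k"
  shows "(\<Sum>b<r j. marg2 R i a j b) = marg R i a"
proof -
  have "(\<Sum>b<r j. marg2 R i a j b) =
      (\<Sum>x\<in>sample_space k r. (\<Sum>b<r j. if x i = a \<and> x j = b then 1 else 0) * pmf R x)"
    unfolding marg2_eq_sum[OF R] by (subst sum.swap) (simp add: sum_distrib_right)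
  also have "\<dots> = (\<Sum>x\<in>sample_space k r. (if x i = a then 1 else 0) * pmf R x)"
  proof (rule sum.cong[OF refl])
    fix x assume x: "x \<in> sample_space k r"
    have "(\<Sum>b<r j. if x i = a \<and> x j = b then 1 else 0) =
        (\<Sum>b<r j. if b = x j then if x i = a then 1 else 0 else (0::real))"
      by (rule sum.cong) auto
    thus "(\<Sum>b<r j. if x i = a \<and> x j = b then 1 else 0) * pmf R x = (if x i = a then 1 else 0) * pmf R x"
      using sample_space_less[OF x j] by (simp add: sum.delta)
  qed
  finally show ?thesis using marg_eq_sum[OF R] by simp
qed

lemma Kmat_carrier: "Kmat k r R \<in> carrier_mat (block_offset r k) (block_offset r k)"
  unfolding Kmat_def block_offset_def by simp

lemma index_Kmat:
  "p < block_offset r k \<Longrightarrow> q < block_offset r k \<Longrightarrow>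
    Kmat k r R $$ (p, q) = marg2 R (blk r p) (pos r p) (blk r q) (pos r q)"
  unfolding Kmat_def block_offset_def[symmetric] by (simp add: Let_def marg2_same)

lemma index_Kmat_block:
  assumes "i < k" "a < r i" "j < k" "b < r j"
  shows "Kmat k r R $$ (block_offset r i + a, block_offset r j + b) = marg2 R i a j b"
  using assms by (simp add: index_Kmat block_offset_add_less blk_block_offset_add pos_block_offset_add)


section \<open>The variational formula\<close>

definition additive_fun_of_vec :: "nat \<Rightarrow> (nat \<Rightarrow> nat) \<Rightarrow> real Matrix.vec \<Rightarrow> (nat \<Rightarrow> nat) \<Rightarrow> real"
  where "additive_fun_of_vec k r v x = (\<Sum>i<k. v $ (block_offset r i + x i))"

lemma additive_fun_of_vec_in_additive_class: "additive_fun_of_vec k r v \<in> additive_class k"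
  unfolding additive_class_def additive_fun_of_vec_def
  by (auto intro!: exI[of _ "\<lambda>i a. v $ (block_offset r i + a)"])

lemma quadratic_form_Kmat:
  assumes R: "set_pmf R \<subseteq> sample_space k r" and v: "v \<in> carrier_vec (block_offset r k)"
  shows "v \<bullet> (Kmat k r R *\<^sub>v v) = measure_pmf.expectation R (\<lambda>x. (additive_fun_of_vec k r v x)\<^sup>2)"
proof -
  let ?N = "block_offset r k" and ?S = "sample_space k r"
  let ?v = "\<lambda>i a. v $ (block_offset r i + a)"
  have "v \<bullet> (Kmat k r R *\<^sub>v v) = (\<Sum>p<?N. v $ p * (\<Sum>q<?N. Kmat k r R $$ (p, q) * v $ q))"
    using Kmat_carrier[of k r R] v by (auto simp: scalar_prod_def atLeast0LessThan intro!: sum.cong)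
  also have "\<dots> = (\<Sum>i<k. \<Sum>a<r i. \<Sum>j<k. \<Sum>b<r j. ?v i a * ?v j b * marg2 R i a j b)"
    unfolding sum_lessThan_block_offset
    by (auto intro!: sum.cong simp: index_Kmat_block sum_distrib_left mult.assoc mult.left_commute)
  also have "\<dots> = (\<Sum>i<k. \<Sum>j<k. \<Sum>a<r i. \<Sum>b<r j. ?v i a * ?v j b * marg2 R i a j b)"
    by (rule sum.cong[OF refl], rule sum.swap)
  also have "\<dots> = (\<Sum>i<k. \<Sum>j<k. \<Sum>x\<in>?S. ?v i (x i) * ?v j (x j) * pmf R x)"
    by (intro sum.cong refl, subst sum_pmf_coord_pair_eq_marg2[OF R]) auto
  also have "\<dots> = (\<Sum>i<k. \<Sum>x\<in>?S. \<Sum>j<k. ?v i (x i) * ?v j (x j) * pmf R x)"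
    by (intro sum.cong refl) (rule sum.swap)
  also have "\<dots> = (\<Sum>x\<in>?S. \<Sum>i<k. \<Sum>j<k. ?v i (x i) * ?v j (x j) * pmf R x)"
    by (rule sum.swap)
  also have "\<dots> = (\<Sum>x\<in>?S. (additive_fun_of_vec k r v x)\<^sup>2 * pmf R x)"
    unfolding additive_fun_of_vec_def power2_eq_square sum_product by (simp add: sum_distrib_right)
  also have "\<dots> = measure_pmf.expectation R (\<lambda>x. (additive_fun_of_vec k r v x)\<^sup>2)"
    by (rule expectation_eq_sum_sample_space[OF R, symmetric])
  finally show ?thesis .
qed

lemma quadratic_form_Kmat_nonneg:
  "set_pmf R \<subseteq> sample_space k r \<Longrightarrow> v \<in> carrier_vec (block_offset r k) \<Longrightarrow>
    v \<bullet> (Kmat k r R *\<^sub>v v) \<ge> 0"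
  by (simp add: quadratic_form_Kmat)

text \<open>Every difference of two additive functions is, on the sample space, of the form
  \<open>additive_fun_of_vec k r v\<close>, and the zero function is additive.\<close>
lemma transfer_coeff_additive_class_eq_SUP:
  assumes P: "set_pmf P \<subseteq> sample_space k r" and Q: "set_pmf Q \<subseteq> sample_space k r"
  shows "transfer_coeff P Q (additive_class k) =
    (SUP v \<in> carrier_vec (\<Sum>i<k. r i). eratio (v \<bullet> (Kmat k r Q *\<^sub>v v)) (v \<bullet> (Kmat k r P *\<^sub>v v)))"
proof -
  let ?N = "block_offset r k" and ?S = "sample_space k r" and ?F = "additive_class k"
  let ?ratio = "\<lambda>h. eratio (measure_pmf.expectation Q (\<lambda>x. (h x)\<^sup>2)) (measure_pmf.expectation P (\<lambda>x. (h x)\<^sup>2))"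
  have ratio_cong: "?ratio h1 = ?ratio h2" if "\<And>x. x \<in> ?S \<Longrightarrow> h1 x = h2 x" for h1 h2
    using that by (simp add: expectation_eq_sum_sample_space[OF P] expectation_eq_sum_sample_space[OF Q])
  have "(SUP fg \<in> ?F \<times> ?F. ?ratio (\<lambda>x. fst fg x - snd fg x)) \<le>
      (SUP v \<in> carrier_vec ?N. ?ratio (additive_fun_of_vec k r v))"
  proof (rule SUP_mono)
    fix fg assume "fg \<in> ?F \<times> ?F"
    then obtain fs gs where f: "fst fg = (\<lambda>x. \<Sum>i<k. fs i (x i))" and g: "snd fg = (\<lambda>x. \<Sum>i<k. gs i (x i))"
      unfolding additive_class_def by auto
    define v where "v = Matrix.vec ?N (\<lambda>p. fs (blk r p) (pos r p) - gs (blk r p) (pos r p))"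
    have "additive_fun_of_vec k r v x = fst fg x - snd fg x" if x: "x \<in> ?S" for x
      unfolding additive_fun_of_vec_def f g sum_subtractf[symmetric] using sample_space_less[OF x]
      by (intro sum.cong refl) (simp add: v_def block_offset_add_less blk_block_offset_add pos_block_offset_add)
    hence "?ratio (\<lambda>x. fst fg x - snd fg x) = ?ratio (additive_fun_of_vec k r v)"
      by (intro ratio_cong) simp
    thus "\<exists>v\<in>carrier_vec ?N. ?ratio (\<lambda>x. fst fg x - snd fg x) \<le> ?ratio (additive_fun_of_vec k r v)"
      unfolding v_def by auto
  qed
  moreover have "(SUP v \<in> carrier_vec ?N. ?ratio (additive_fun_of_vec k r v)) \<le>
      (SUP fg \<in> ?F \<times> ?F. ?ratio (\<lambda>x. fst fg x - snd fg x))"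
  proof (rule SUP_mono)
    fix v :: "real Matrix.vec"
    have "(\<lambda>x. 0) \<in> ?F" unfolding additive_class_def by (auto intro!: exI[of _ "\<lambda>i a. 0"])
    thus "\<exists>fg\<in>?F \<times> ?F. ?ratio (additive_fun_of_vec k r v) \<le> ?ratio (\<lambda>x. fst fg x - snd fg x)"
      using additive_fun_of_vec_in_additive_class
      by (intro bexI[of _ "(additive_fun_of_vec k r v, \<lambda>x. 0)"]) auto
  qed
  moreover have "(SUP v \<in> carrier_vec ?N. ?ratio (additive_fun_of_vec k r v)) =
      (SUP v \<in> carrier_vec (\<Sum>i<k. r i). eratio (v \<bullet> (Kmat k r Q *\<^sub>v v)) (v \<bullet> (Kmat k r P *\<^sub>v v)))"
    unfolding block_offset_def by (rule SUP_cong) (simp_all add: quadratic_form_Kmat[OF P] quadratic_form_Kmat[OF Q] block_offset_def)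
  ultimately show ?thesis unfolding transfer_coeff_def by (simp only: antisym)
qed

lemma SUP_eratio_le:
  assumes "C \<ge> 0" and "\<And>v. v \<in> V \<Longrightarrow> 0 \<le> a v \<and> 0 \<le> b v \<and> a v \<le> C * b v"
  shows "(SUP v \<in> V. eratio (a v) (b v)) \<le> ereal C"
proof (rule SUP_least)
  fix v assume "v \<in> V"
  hence "0 \<le> a v" "0 \<le> b v" "a v \<le> C * b v" using assms(2) by auto
  thus "eratio (a v) (b v) \<le> ereal C"
    using assms(1) by (cases "b v = 0") (auto simp: eratio_def divide_le_eq)
qed


section \<open>The normalised matrix and the eigenvalue bound\<close>

lemma index_diag_mult_mult_diag:
  fixes K :: "real mat" and d :: "nat \<Rightarrow> real" and n :: nat
  defines "D \<equiv> Matrix.mat n n (\<lambda>(p, q). if p = q then d p else 0)"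
  assumes K: "K \<in> carrier_mat n n" and p: "p < n" and q: "q < n"
  shows "(D * K * D) $$ (p, q) = d p * K $$ (p, q) * d q"
proof -
  have DK: "(D * K) $$ (p, t) = d p * K $$ (p, t)" if "t < n" for t
  proof -
    have "(D * K) $$ (p, t) = (\<Sum>s\<in>{0..<n}. (if p = s then d p else 0) * K $$ (s, t))"
      using K p that by (auto simp: D_def scalar_prod_def intro!: sum.cong)
    also have "\<dots> = d p * K $$ (p, t)"
      using p by (simp add: if_distrib[of "\<lambda>x. x * _"] sum.delta cong: if_cong)
    finally show ?thesis .
  qed
  have "(D * K * D) $$ (p, q) = (\<Sum>s\<in>{0..<n}. (D * K) $$ (p, s) * (if s = q then d q else 0))"
    using K p q by (auto simp: D_def scalar_prod_def intro!: sum.cong)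
  also have "\<dots> = (D * K) $$ (p, q) * d q"
    using q by (simp add: if_distrib[of "\<lambda>x. _ * x"] sum.delta cong: if_cong)
  finally show ?thesis using DK[OF q] by simp
qed

lemma sprod_self_eq_sum: "(x :: real Matrix.vec) \<in> carrier_vec n \<Longrightarrow> x \<bullet> x = (\<Sum>p<n. (x $ p)\<^sup>2)"
  unfolding scalar_prod_def by (auto simp: atLeast0LessThan power2_eq_square)

locale positive_marginals =
  fixes k :: nat and r :: "nat \<Rightarrow> nat" and P :: "(nat \<Rightarrow> nat) pmf"
  assumes k_pos: "0 < k" and P_space: "set_pmf P \<subseteq> sample_space k r"
    and marg_pos: "\<And>i t. i < k \<Longrightarrow> t < r i \<Longrightarrow> marg P i t > 0"
begin

abbreviation N :: nat where "N \<equiv> block_offset r k"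

lemma r_pos: "i < k \<Longrightarrow> r i > 0"
  using sample_space_dim_pos[OF P_space] .

lemma k_le_N: "k \<le> N"
proof -
  have "(\<Sum>i<k. (1::nat)) \<le> (\<Sum>i<k. r i)" by (rule sum_mono) (use r_pos in \<open>auto simp: Suc_le_eq\<close>)
  thus ?thesis unfolding block_offset_def by simp
qed

definition marg_sqrt :: "nat \<Rightarrow> real" where
  "marg_sqrt p = sqrt (marg P (blk r p) (pos r p))"

lemma marg_blk_pos: "p < N \<Longrightarrow> marg P (blk r p) (pos r p) > 0"
  using blk_pos_less[of p r k] marg_pos by auto

lemma marg_sqrt_pos: "p < N \<Longrightarrow> marg_sqrt p > 0"
  unfolding marg_sqrt_def using marg_blk_pos by simp

lemma marg_sqrt_nonzero: "p < N \<Longrightarrow> marg_sqrt p \<noteq> 0"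
  using marg_sqrt_pos by force

lemma normalize_Kmat_carrier: "normalize_mat (Kmat k r P) \<in> carrier_mat N N"
  unfolding normalize_mat_def Let_def using Kmat_carrier[of k r P] by auto

lemma index_normalize_Kmat:
  assumes p: "p < N" and q: "q < N"
  shows "normalize_mat (Kmat k r P) $$ (p, q) = Kmat k r P $$ (p, q) / (marg_sqrt p * marg_sqrt q)"
proof -
  have "Kmat k r P $$ (s, s) = marg_sqrt s ^ 2" if "s < N" for s
    using that marg_blk_pos[OF that] by (simp add: index_Kmat marg2_same marg_sqrt_def)
  thus ?thesis unfolding normalize_mat_def Let_def
    using Kmat_carrier[of k r P] p q marg_sqrt_pos[OF p] marg_sqrt_pos[OF q]
    by (simp add: index_diag_mult_mult_diag[OF Kmat_carrier p q])
qed

lemma normalize_Kmat_sym: "(normalize_mat (Kmat k r P))\<^sup>T = normalize_mat (Kmat k r P)"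
proof (rule eq_matI)
  fix p q assume "p < dim_row (normalize_mat (Kmat k r P))" "q < dim_col (normalize_mat (Kmat k r P))"
  thus "(normalize_mat (Kmat k r P))\<^sup>T $$ (p, q) = normalize_mat (Kmat k r P) $$ (p, q)"
    using normalize_Kmat_carrier
    by (auto simp: index_normalize_Kmat index_Kmat marg2_commute[of P "blk r p"] mult.commute)
qed (use normalize_Kmat_carrier in auto)

lemma quadratic_form_normalize_Kmat:
  assumes v: "v \<in> carrier_vec N"
  defines "w \<equiv> Matrix.vec N (\<lambda>p. marg_sqrt p * v $ p)"
  shows "w \<bullet> (normalize_mat (Kmat k r P) *\<^sub>v w) = v \<bullet> (Kmat k r P *\<^sub>v v)"
proof -
  let ?A = "normalize_mat (Kmat k r P)" and ?K = "Kmat k r P"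
  have "w \<bullet> (?A *\<^sub>v w) = (\<Sum>p<N. \<Sum>q<N. marg_sqrt p * v $ p * ?A $$ (p, q) * (marg_sqrt q * v $ q))"
    using normalize_Kmat_carrier
    by (auto simp: w_def scalar_prod_def atLeast0LessThan sum_distrib_left mult.assoc intro!: sum.cong)
  also have "\<dots> = (\<Sum>p<N. \<Sum>q<N. v $ p * ?K $$ (p, q) * v $ q)"
    by (intro sum.cong refl) (simp add: index_normalize_Kmat marg_sqrt_nonzero field_simps)
  also have "\<dots> = v \<bullet> (?K *\<^sub>v v)"
    using Kmat_carrier[of k r P] v
    by (auto simp: scalar_prod_def atLeast0LessThan sum_distrib_left mult.assoc intro!: sum.cong)
  finally show ?thesis .
qed

lemma normalize_Kmat_psd:
  assumes x: "x \<in> carrier_vec N"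
  shows "x \<bullet> (normalize_mat (Kmat k r P) *\<^sub>v x) \<ge> 0"
proof -
  define v where "v = Matrix.vec N (\<lambda>p. x $ p / marg_sqrt p)"
  have v: "v \<in> carrier_vec N" unfolding v_def by simp
  have "Matrix.vec N (\<lambda>p. marg_sqrt p * v $ p) = x"
    using x unfolding v_def by (intro eq_vecI) (auto simp: marg_sqrt_nonzero)
  thus ?thesis using quadratic_form_normalize_Kmat[OF v] quadratic_form_Kmat_nonneg[OF P_space v]
    by simp
qed

text \<open>\<open>kernel_mat *\<^sub>v c\<close> is \<open>diag(K\<^sub>P)\<^sup>1\<^sup>/\<^sup>2\<close> applied to the vector that is constant
  \<open>zero_sum_ext c i\<close> on block \<open>i\<close>. Such vectors are annihilated by \<open>K\<^sub>P\<close>, because every row of a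
  block \<open>P\<^sub>i\<^sub>j\<close> sums to the marginal \<open>P(x\<^sub>i = a)\<close> and the block values sum to zero.\<close>
definition zero_sum_ext :: "real Matrix.vec \<Rightarrow> nat \<Rightarrow> real" where
  "zero_sum_ext c i = (if i < k - 1 then c $ i else - (\<Sum>t<k - 1. c $ t))"

definition kernel_mat :: "real mat" where
  "kernel_mat = Matrix.mat N (k - 1)
     (\<lambda>(p, t). marg_sqrt p * ((if blk r p = t then 1 else 0) - (if blk r p = k - 1 then 1 else 0)))"

lemma kernel_mat_carrier: "kernel_mat \<in> carrier_mat N (k - 1)"
  unfolding kernel_mat_def by simp

lemma sum_zero_sum_ext: "(\<Sum>i<k. zero_sum_ext c i) = 0"
proof -
  have "(\<Sum>i<k. zero_sum_ext c i) = (\<Sum>i<k - 1. zero_sum_ext c i) + zero_sum_ext c (k - 1)"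
    using k_pos by (metis Suc_diff_1 sum.lessThan_Suc)
  thus ?thesis unfolding zero_sum_ext_def by simp
qed

lemma index_mult_kernel_mat:
  assumes c: "c \<in> carrier_vec (k - 1)" and p: "p < N"
  shows "(kernel_mat *\<^sub>v c) $ p = marg_sqrt p * zero_sum_ext c (blk r p)"
proof -
  have "(kernel_mat *\<^sub>v c) $ p = (\<Sum>t<k - 1. marg_sqrt p *
      ((if blk r p = t then 1 else 0) - (if blk r p = k - 1 then 1 else 0)) * c $ t)"
    using c p by (auto simp: kernel_mat_def scalar_prod_def atLeast0LessThan)
  also have "\<dots> = marg_sqrt p * zero_sum_ext c (blk r p)"
  proof (cases "blk r p < k - 1")
    case True
    hence "(\<Sum>t<k - 1. marg_sqrt p * ((if blk r p = t then 1 else 0) - (if blk r p = k - 1 then 1 else 0))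
        * c $ t) = (\<Sum>t<k - 1. if t = blk r p then marg_sqrt p * c $ t else 0)"
      by (intro sum.cong) auto
    thus ?thesis using True by (simp add: zero_sum_ext_def)
  next
    case False
    hence "blk r p = k - 1" using blk_pos_less(1)[OF p] by simp
    thus ?thesis using False by (simp add: zero_sum_ext_def sum_negf sum_distrib_left)
  qed
  finally show ?thesis .
qed

lemma normalize_Kmat_kernel_mat:
  assumes c: "c \<in> carrier_vec (k - 1)"
  shows "normalize_mat (Kmat k r P) *\<^sub>v (kernel_mat *\<^sub>v c) = 0\<^sub>v N"
proof (rule eq_vecI)
  fix p assume "p < dim_vec (0\<^sub>v N :: real Matrix.vec)"
  hence p: "p < N" by simp
  obtain i a where ia: "i < k" "a < r i" "p = block_offset r i + a"
    using block_offset_decompose[OF p] by blast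
  have "(normalize_mat (Kmat k r P) *\<^sub>v (kernel_mat *\<^sub>v c)) $ p =
      (\<Sum>q<N. normalize_mat (Kmat k r P) $$ (p, q) * (kernel_mat *\<^sub>v c) $ q)"
    using p normalize_Kmat_carrier kernel_mat_carrier c by (auto simp: scalar_prod_def atLeast0LessThan)
  also have "\<dots> = (\<Sum>q<N. Kmat k r P $$ (p, q) * zero_sum_ext c (blk r q) / marg_sqrt p)"
    using p
    by (intro sum.cong refl) (simp add: index_mult_kernel_mat[OF c] index_normalize_Kmat marg_sqrt_nonzero field_simps)
  also have "\<dots> = (\<Sum>j<k. \<Sum>b<r j. marg2 P i a j b * zero_sum_ext c j / marg_sqrt p)"
    unfolding sum_lessThan_block_offset
    by (intro sum.cong refl) (use ia in \<open>simp add: index_Kmat_block blk_block_offset_add\<close>)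
  also have "\<dots> = (\<Sum>j<k. marg P i a * zero_sum_ext c j / marg_sqrt p)"
    by (intro sum.cong refl)
      (simp add: sum_divide_distrib[symmetric] sum_distrib_right[symmetric] sum_marg2_right[OF P_space])
  also have "\<dots> = 0" by (simp add: sum_distrib_left[symmetric] sum_divide_distrib[symmetric] sum_zero_sum_ext)
  finally show "(normalize_mat (Kmat k r P) *\<^sub>v (kernel_mat *\<^sub>v c)) $ p = 0\<^sub>v N $ p" using p by simp
qed (use normalize_Kmat_carrier in simp)

lemma kernel_mat_inj:
  assumes c: "c \<in> carrier_vec (k - 1)" and G0: "kernel_mat *\<^sub>v c = 0\<^sub>v N"
  shows "c = 0\<^sub>v (k - 1)"
proof (rule eq_vecI)
  fix t assume "t < dim_vec (0\<^sub>v (k - 1) :: real Matrix.vec)"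
  hence t: "t < k - 1" by simp
  define p where "p = block_offset r t"
  have p: "p < N" and bp: "blk r p = t"
    using block_offset_add_less[of t k 0 r] blk_block_offset_add[of 0 r t] r_pos[of t] t
    unfolding p_def by auto
  have "0 = (kernel_mat *\<^sub>v c) $ p" using G0 p by simp
  also have "\<dots> = marg_sqrt p * c $ t" using index_mult_kernel_mat[OF c p] bp t by (simp add: zero_sum_ext_def)
  finally show "c $ t = 0\<^sub>v (k - 1) $ t" using marg_sqrt_pos[OF p] t by simp
qed (use c in simp)


definition max_marg_ratio :: "(nat \<Rightarrow> nat) pmf \<Rightarrow> real" where
  "max_marg_ratio Q = (MAX (i, t) \<in> Sigma {..<k} (\<lambda>i. {..<r i}). marg Q i t / marg P i t)"

lemma marg_le_max_marg_ratio:
  assumes "i < k" "a < r i"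
  shows "marg Q i a \<le> max_marg_ratio Q * marg P i a"
proof -
  have "marg Q i a / marg P i a \<le> max_marg_ratio Q"
    unfolding max_marg_ratio_def by (rule Max_ge) (use assms in \<open>auto intro!: finite_SigmaI\<close>)
  thus ?thesis using marg_pos[OF assms] by (simp add: divide_le_eq)
qed

lemma max_marg_ratio_nonneg: "max_marg_ratio Q \<ge> 0"
proof -
  have "0 \<le> marg Q 0 0" unfolding marg_def by simp
  also have "\<dots> \<le> max_marg_ratio Q * marg P 0 0" by (rule marg_le_max_marg_ratio[OF k_pos r_pos[OF k_pos]])
  finally show ?thesis using marg_pos[OF k_pos r_pos[OF k_pos]] by (simp add: zero_le_mult_iff)
qed

text \<open>Cauchy--Schwarz \<open>(\<Sum>\<^sub>i\<^sub><\<^sub>k u\<^sub>i)\<^sup>2 \<le> k \<Sum>\<^sub>i\<^sub><\<^sub>k u\<^sub>i\<^sup>2\<close> reduces the estimate to single marginals.\<close>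
lemma sum_pmf_sq_additive_le:
  assumes Q: "set_pmf Q \<subseteq> sample_space k r"
  shows "(\<Sum>x\<in>sample_space k r. (\<Sum>i<k. u i (x i))\<^sup>2 * pmf Q x) \<le>
    real k * max_marg_ratio Q * (\<Sum>i<k. \<Sum>a<r i. marg P i a * (u i a)\<^sup>2)"
proof -
  have "(\<Sum>x\<in>sample_space k r. (\<Sum>i<k. u i (x i))\<^sup>2 * pmf Q x) \<le>
      (\<Sum>x\<in>sample_space k r. (real k * (\<Sum>i<k. (u i (x i))\<^sup>2)) * pmf Q x)"
  proof (rule sum_mono)
    fix x
    have "(\<Sum>i<k. u i (x i))\<^sup>2 \<le> (\<Sum>i<k. (u i (x i))\<^sup>2) * real (card {..<k})"
      by (rule sum_squared_le_sum_of_squares)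
    thus "(\<Sum>i<k. u i (x i))\<^sup>2 * pmf Q x \<le> (real k * (\<Sum>i<k. (u i (x i))\<^sup>2)) * pmf Q x"
      by (intro mult_right_mono) (auto simp: mult.commute)
  qed
  also have "\<dots> = real k * (\<Sum>i<k. \<Sum>x\<in>sample_space k r. (u i (x i))\<^sup>2 * pmf Q x)"
    by (simp add: sum_distrib_left sum_distrib_right mult.assoc sum.swap[of _ "sample_space k r"])
  also have "\<dots> = real k * (\<Sum>i<k. \<Sum>a<r i. (u i a)\<^sup>2 * marg Q i a)"
    by (intro arg_cong[where f = "\<lambda>x. real k * x"] sum.cong refl sum_pmf_coord_eq_marg[OF Q]) auto
  also have "\<dots> \<le> real k * (\<Sum>i<k. \<Sum>a<r i. (u i a)\<^sup>2 * (max_marg_ratio Q * marg P i a))"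
    by (intro mult_left_mono sum_mono) (auto intro: marg_le_max_marg_ratio)
  also have "\<dots> = real k * max_marg_ratio Q * (\<Sum>i<k. \<Sum>a<r i. marg P i a * (u i a)\<^sup>2)"
    by (simp add: sum_distrib_left sum_distrib_right mult_ac)
  finally show ?thesis .
qed

lemma sq_dist_kernel_mat:
  assumes v: "v \<in> carrier_vec N" and c: "c \<in> carrier_vec (k - 1)"
  defines "w \<equiv> Matrix.vec N (\<lambda>p. marg_sqrt p * v $ p)"
  shows "(w - kernel_mat *\<^sub>v c) \<bullet> (w - kernel_mat *\<^sub>v c) =
    (\<Sum>i<k. \<Sum>a<r i. marg P i a * (v $ (block_offset r i + a) - zero_sum_ext c i)\<^sup>2)"
proof -
  have Gc: "kernel_mat *\<^sub>v c \<in> carrier_vec N" using kernel_mat_carrier c by simp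
  have "(w - kernel_mat *\<^sub>v c) \<bullet> (w - kernel_mat *\<^sub>v c) = (\<Sum>p<N. ((w - kernel_mat *\<^sub>v c) $ p)\<^sup>2)"
    by (rule sprod_self_eq_sum) (use Gc in \<open>simp add: w_def\<close>)
  also have "\<dots> = (\<Sum>p<N. marg P (blk r p) (pos r p) * (v $ p - zero_sum_ext c (blk r p))\<^sup>2)"
  proof (rule sum.cong[OF refl])
    fix p assume "p \<in> {..<N}"
    hence p: "p < N" by simp
    have "(w - kernel_mat *\<^sub>v c) $ p = marg_sqrt p * (v $ p - zero_sum_ext c (blk r p))"
      using p Gc kernel_mat_carrier by (subst index_minus_vec)
        (auto simp: w_def index_mult_kernel_mat[OF c p] algebra_simps carrier_vecD[OF Gc])
    thus "((w - kernel_mat *\<^sub>v c) $ p)\<^sup>2 = marg P (blk r p) (pos r p) * (v $ p - zero_sum_ext c (blk r p))\<^sup>2"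
      using marg_blk_pos[OF p] by (simp add: power_mult_distrib marg_sqrt_def)
  qed
  also have "\<dots> = (\<Sum>i<k. \<Sum>a<r i. marg P i a * (v $ (block_offset r i + a) - zero_sum_ext c i)\<^sup>2)"
    unfolding sum_lessThan_block_offset
    by (intro sum.cong refl) (simp add: blk_block_offset_add pos_block_offset_add)
  finally show ?thesis .
qed

text \<open>Shifting the blocks of \<open>v\<close> by constants with zero sum does not change the additive function,
  and \<open>kth_smallest_eig_residual_bound\<close> supplies a shift whose \<open>P\<close>-weighted squared norm is at most
  \<open>v\<^sup>T K\<^sub>P v / \<lambda>\<^sub>k\<close>.\<close>
lemma quadratic_form_Kmat_le:
  assumes Q: "set_pmf Q \<subseteq> sample_space k r"
    and lam: "kth_smallest_eig k (normalize_mat (Kmat k r P)) > 0" and v: "v \<in> carrier_vec N"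
  shows "v \<bullet> (Kmat k r Q *\<^sub>v v) \<le> real k / kth_smallest_eig k (normalize_mat (Kmat k r P))
     * max_marg_ratio Q * (v \<bullet> (Kmat k r P *\<^sub>v v))"
proof -
  let ?l = "kth_smallest_eig k (normalize_mat (Kmat k r P))"
  define w where "w = Matrix.vec N (\<lambda>p. marg_sqrt p * v $ p)"
  have w: "w \<in> carrier_vec N" unfolding w_def by simp
  obtain c where c: "c \<in> carrier_vec (k - 1)"
    and bound: "?l * ((w - kernel_mat *\<^sub>v c) \<bullet> (w - kernel_mat *\<^sub>v c)) \<le> w \<bullet> (normalize_mat (Kmat k r P) *\<^sub>v w)"
    by (rule kth_smallest_eig_residual_bound[OF normalize_Kmat_carrier normalize_Kmat_sym kernel_mat_carrier
        normalize_Kmat_kernel_mat kernel_mat_inj k_le_N lam w])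
  define u where "u i a = v $ (block_offset r i + a) - zero_sum_ext c i" for i a
  have u: "additive_fun_of_vec k r v x = (\<Sum>i<k. u i (x i))" for x
    unfolding additive_fun_of_vec_def u_def sum_subtractf sum_zero_sum_ext by simp
  have "?l * (\<Sum>i<k. \<Sum>a<r i. marg P i a * (u i a)\<^sup>2) \<le> v \<bullet> (Kmat k r P *\<^sub>v v)"
    using bound unfolding sq_dist_kernel_mat[OF v c] w_def quadratic_form_normalize_Kmat[OF v] u_def .
  hence P_bound: "(\<Sum>i<k. \<Sum>a<r i. marg P i a * (u i a)\<^sup>2) \<le> v \<bullet> (Kmat k r P *\<^sub>v v) / ?l"
    using lam by (simp add: field_simps)
  have "v \<bullet> (Kmat k r Q *\<^sub>v v) = (\<Sum>x\<in>sample_space k r. (\<Sum>i<k. u i (x i))\<^sup>2 * pmf Q x)"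
    unfolding quadratic_form_Kmat[OF Q v] expectation_eq_sum_sample_space[OF Q] u ..
  also have "\<dots> \<le> real k * max_marg_ratio Q * (\<Sum>i<k. \<Sum>a<r i. marg P i a * (u i a)\<^sup>2)"
    by (rule sum_pmf_sq_additive_le[OF Q])
  also have "\<dots> \<le> real k * max_marg_ratio Q * (v \<bullet> (Kmat k r P *\<^sub>v v) / ?l)"
    by (intro mult_left_mono P_bound) (simp add: max_marg_ratio_nonneg)
  finally show ?thesis by simp
qed

lemma transfer_coeff_additive_class_le:
  assumes Q: "set_pmf Q \<subseteq> sample_space k r"
  shows "transfer_coeff P Q (additive_class k) \<le>
    (if kth_smallest_eig k (normalize_mat (Kmat k r P)) = 0 then \<infinity>
     else ereal (real k / kth_smallest_eig k (normalize_mat (Kmat k r P)) * max_marg_ratio Q))"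
proof -
  let ?l = "kth_smallest_eig k (normalize_mat (Kmat k r P))"
  have "?l \<ge> 0"
    using psd_kth_smallest_eig_nonneg[OF normalize_Kmat_carrier normalize_Kmat_sym normalize_Kmat_psd]
      k_pos k_le_N by simp
  moreover have "transfer_coeff P Q (additive_class k) \<le> ereal (real k / ?l * max_marg_ratio Q)" if "?l > 0"
    unfolding transfer_coeff_additive_class_eq_SUP[OF P_space Q] block_offset_def[symmetric]
    using that max_marg_ratio_nonneg quadratic_form_Kmat_nonneg[OF P_space]
      quadratic_form_Kmat_nonneg[OF Q] quadratic_form_Kmat_le[OF Q that]
    by (intro SUP_eratio_le) auto
  ultimately show ?thesis by auto
qed

end

theorem mainTheorem3:
  fixes k :: nat and r :: "nat \<Rightarrow> nat" and P Q :: "(nat \<Rightarrow> nat) pmf"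
  assumes "k \<ge> 2"
    and "set_pmf P \<subseteq> sample_space k r"
    and "set_pmf Q \<subseteq> sample_space k r"
    and "\<And>i t. i < k \<Longrightarrow> t < r i \<Longrightarrow> marg P i t > 0"
  shows "(transfer_coeff P Q (additive_class k) =
           (SUP v \<in> carrier_vec (\<Sum>i<k. r i).
              eratio (scalar_prod v (Kmat k r Q *\<^sub>v v)) (scalar_prod v (Kmat k r P *\<^sub>v v)))) \<and>
         transfer_coeff P Q (additive_class k) \<le>
           (if kth_smallest_eig k (normalize_mat (Kmat k r P)) = 0 then \<infinity>
            else ereal (real k / kth_smallest_eig k (normalize_mat (Kmat k r P))
                   * (MAX (i, t) \<in> Sigma {..<k} (\<lambda>i. {..<r i}). marg Q i t / marg P i t)))"
proof
  show "transfer_coeff P Q (additive_class k) =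
      (SUP v \<in> carrier_vec (\<Sum>i<k. r i). eratio (v \<bullet> (Kmat k r Q *\<^sub>v v)) (v \<bullet> (Kmat k r P *\<^sub>v v)))"
    using transfer_coeff_additive_class_eq_SUP assms(2,3) .
  interpret positive_marginals k r P
    using assms by unfold_locales auto
  show "transfer_coeff P Q (additive_class k) \<le> (if kth_smallest_eig k (normalize_mat (Kmat k r P)) = 0
      then \<infinity> else ereal (real k / kth_smallest_eig k (normalize_mat (Kmat k r P))
        * (MAX (i, t) \<in> Sigma {..<k} (\<lambda>i. {..<r i}). marg Q i t / marg P i t)))"
    using transfer_coeff_additive_class_le[OF assms(3)] unfolding max_marg_ratio_def .
qed

end
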